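(* Let $p \geq 3$ be a prime and let $B > 1$ be a real number. Write $p-1 = p_1^{e_1} p_2^{e_2} \cdots p_h^{e_h}\, Q$, where $p_1 = 2 < p_2 < \cdots < p_h$ are the distinct primes less than $B$ dividing $p-1$, $e_i \geq 1$ is the exact power of $p_i$ dividing $p-1$, and $Q$ is a positive integer having no prime factor less than $B$. Assume $Q > 1$. For each $1 \leq i \leq h$ let $\alpha_i \in (\mathbb{Z}/p\mathbb{Z})^*$ satisfy $\alpha_i^{(p-1)/p_i} \not\equiv 1 \pmod p$, and set $a \equiv \prod_{i=1}^h \alpha_i^{(p-1)/p_i^{e_i}} \pmod p$. Let $S = \{ b \in (\mathbb{Z}/p\mathbb{Z})^* : b^{(p-1)/Q} \not\equiv 1 \pmod p\}$, and for $b \in S$ let $g_b \equiv a\, b^{(p-1)/Q} \pmod p$. Then the number of $b \in S$ for which $g_b$ is a primitive root modulo $p$ (i.e. a generator of $(\mathbb{Z}/p\mathbb{Z})^*$) is at least $\frac{\varphi(Q)}{Q-1}\,|S|$. Equivalently, if $b$ is chosen uniformly at random from $S$, then $g_b$ is a primitive root modulo $p$ with probability at least $\frac{\varphi(Q)}{Q-1}$.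
   Context: $\varphi$ denotes Euler's totient function. This describes the output of the paper's "Probabilistic Primitive Root" algorithm in the case where the factorization of $p-1$ into primes below $B$ does not fully factor $p-1$: the algorithm returns $g_b = a b^{(p-1)/Q}$ for a randomly chosen $b$ with $b^{(p-1)/Q} \not\equiv 1 \pmod p$. *)

theory Defs
  imports "HOL-Number_Theory.Number_Theory"
begin

end

theory Submission
  imports Defs
begin

text \<open>
  Fix a primitive root \<open>g\<close> modulo \<open>p\<close> and write \<open>p - 1 = m * Q\<close>; \<open>m\<close> and \<open>Q\<close> are coprime
  because their prime factors lie on opposite sides of \<open>B\<close>. The factor of \<open>a\<close> belonging to a
  prime \<open>q\<close> with \<open>q ^ e\<close> exactly dividing \<open>p - 1\<close> has order exactly \<open>q ^ e\<close>, so \<open>a\<close> has order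
  \<open>m\<close>, i.e. \<open>a = g ^ t\<close> with \<open>gcd t (p - 1) = Q\<close>. For \<open>b = g ^ k\<close>, \<open>b ^ m \<noteq> 1\<close> iff \<open>Q\<close> does
  not divide \<open>k\<close>, and \<open>a * b ^ m = g ^ (t + k * m)\<close> is a primitive root iff \<open>t + k * m\<close> is
  coprime to \<open>m * Q\<close>, i.e. iff \<open>k\<close> is coprime to \<open>Q\<close>. Counting \<open>k < m * Q\<close> gives
  \<open>card S = m * (Q - 1)\<close> and exactly \<open>m * totient Q\<close> good \<open>b\<close>: the bound holds with equality.
\<close>

lemma card_less_mult_mod_filter:
  fixes m Q :: nat and R :: "nat \<Rightarrow> bool"
  assumes "Q > 0"
  shows "card {k. k < m * Q \<and> R (k mod Q)} = m * card {j. j < Q \<and> R j}"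
proof -
  have "bij_betw (\<lambda>k. (k div Q, k mod Q))
          {k. k < m * Q \<and> R (k mod Q)} ({..<m} \<times> {j. j < Q \<and> R j})"
  proof (rule bij_betwI[where g = "\<lambda>(i, j). i * Q + j"])
    show "(\<lambda>(i, j). i * Q + j) \<in> {..<m} \<times> {j. j < Q \<and> R j} \<rightarrow> {k. k < m * Q \<and> R (k mod Q)}"
    proof clarsimp
      fix i j assume "i < m" "j < Q"
      then have "i * Q + j < (i + 1) * Q" by simp
      also have "\<dots> \<le> m * Q" using \<open>i < m\<close> by (intro mult_right_mono) auto
      finally show "i * Q + j < m * Q" .
    qed
  qed (use assms in \<open>auto simp: less_mult_imp_div_less\<close>)
  then show ?thesis by (simp add: bij_betw_same_card card_cartesian_product)
qed

lemma card_coprime_less_mult: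
  fixes m Q :: nat
  assumes "Q > 1"
  shows "card {k. k < m * Q \<and> coprime k Q} = m * totient Q"
proof -
  have "{j. j < Q \<and> coprime j Q} = totatives Q"
  proof (intro Set.set_eqI iffI)
    fix j assume "j \<in> totatives Q"
    then show "j \<in> {j. j < Q \<and> coprime j Q}"
      using assms by (simp add: totatives_less in_totatives_iff)
  next
    fix j assume "j \<in> {j. j < Q \<and> coprime j Q}"
    then show "j \<in> totatives Q"
      using assms by (auto simp: in_totatives_iff intro: Nat.gr0I)
  qed
  then show ?thesis
    using card_less_mult_mod_filter[of Q m "\<lambda>j. coprime j Q"] assms
    by (simp add: totient_def)
qed

lemma card_not_dvd_less_mult:
  fixes m Q :: nat
  assumes "Q > 0"
  shows "card {k. k < m * Q \<and> \<not> Q dvd k} = m * (Q - 1)"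
proof -
  have "{j. j < Q \<and> j \<noteq> 0} = {0<..<Q}" by auto
  then show ?thesis
    using card_less_mult_mod_filter[of Q m "\<lambda>j. j \<noteq> 0"] assms
    by (simp add: dvd_eq_mod_eq_0)
qed

lemma card_filter_bij_betw:
  assumes "bij_betw f A B"
  shows "card {b \<in> B. R b} = card {k \<in> A. R (f k)}"
proof -
  have "bij_betw f {k \<in> A. R (f k)} {b \<in> B. R b}"
    using assms by (auto simp: bij_betw_def inj_on_def)
  then show ?thesis by (simp add: bij_betw_same_card)
qed

lemma coprime_primeI:
  fixes a b :: nat
  assumes "\<And>q. prime q \<Longrightarrow> q dvd a \<Longrightarrow> q dvd b \<Longrightarrow> False"
  shows "coprime a b"
proof (rule coprimeI)
  fix d assume "d dvd a" "d dvd b"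
  show "is_unit d"
  proof (rule ccontr)
    assume "\<not> is_unit d"
    then have "d \<noteq> 1" by auto
    then obtain q where "prime q" "q dvd d" using prime_factor_nat by blast
    then show False using assms \<open>d dvd a\<close> \<open>d dvd b\<close> dvd_trans by blast
  qed
qed

lemma
  fixes n Q :: nat and B :: real
  assumes "Q dvd n"
    and rough: "\<forall>q. prime q \<and> q dvd Q \<longrightarrow> real q \<ge> B"
    and smooth: "\<forall>q. prime q \<and> q dvd n div Q \<longrightarrow> real q < B"
  shows coprime_smooth_part_rough_part: "coprime (n div Q) Q"
    and prime_divisors_below_eq_smooth_part:
      "{q. prime q \<and> q dvd n \<and> real q < B} = {q. prime q \<and> q dvd n div Q}"
proof -
  have not_both: "\<not> q dvd Q" if "prime q" "real q < B" for q
  proof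
    assume "q dvd Q"
    with rough that(1) have "real q \<ge> B" by blast
    with that(2) show False by simp
  qed
  show "coprime (n div Q) Q"
  proof (rule coprime_primeI)
    fix q assume "prime q" "q dvd n div Q" "q dvd Q"
    with smooth not_both show False by blast
  qed
  have n: "n div Q * Q = n" using assms(1) by (rule dvd_div_mult_self)
  show "{q. prime q \<and> q dvd n \<and> real q < B} = {q. prime q \<and> q dvd n div Q}"
  proof (intro Set.set_eqI iffI)
    fix q assume "q \<in> {q. prime q \<and> q dvd n div Q}"
    moreover from this have "q dvd n div Q * Q" by simp
    then have "q dvd n" by (simp only: n)
    ultimately show "q \<in> {q. prime q \<and> q dvd n \<and> real q < B}" using smooth by blast
  next
    fix q assume "q \<in> {q. prime q \<and> q dvd n \<and> real q < B}"
    then have q: "prime q" "q dvd n" "real q < B" by simp_all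
    have "q dvd n div Q * Q" using q(2) by (simp only: n)
    moreover have "\<not> q dvd Q" using not_both q by blast
    ultimately show "q \<in> {q. prime q \<and> q dvd n div Q}" using q(1) by (simp add: prime_dvd_mult_iff)
  qed
qed

lemma coprime_add_mult_iff:
  fixes t k m Q :: nat
  assumes "gcd t (m * Q) = Q" "coprime m Q"
  shows "coprime (t + k * m) (m * Q) \<longleftrightarrow> coprime k Q"
proof -
  have "Q dvd t" using gcd_dvd1[of t "m * Q"] assms(1) by simp
  then obtain s where s: "t = Q * s" ..
  have "coprime t m"
  proof (rule coprimeI)
    fix d assume "d dvd t" "d dvd m"
    then have "d dvd Q" using gcd_greatest[OF \<open>d dvd t\<close> dvd_mult2[OF \<open>d dvd m\<close>, of Q]] assms(1) by simp
    with assms(2) \<open>d dvd m\<close> show "is_unit d" by (rule coprime_common_divisor)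
  qed
  have "gcd (t + k * m) m = gcd t m" by (metis gcd_add_mult gcd.commute add.commute)
  then have "coprime (t + k * m) m"
    using \<open>coprime t m\<close> unfolding coprime_iff_gcd_eq_1 by simp
  moreover have "gcd Q (s * Q + k * m) = gcd Q (k * m)" by (rule gcd_add_mult)
  then have "coprime (t + k * m) Q \<longleftrightarrow> coprime (k * m) Q"
    unfolding coprime_iff_gcd_eq_1 by (metis s gcd.commute mult.commute)
  ultimately show ?thesis using assms(2) by simp
qed

lemma ord_eqI_prime_divisors:
  fixes n x m :: nat
  assumes "[x ^ m = 1] (mod n)" and "m > 0"
    and "\<And>q. prime q \<Longrightarrow> q dvd m \<Longrightarrow> \<not> [x ^ (m div q) = 1] (mod n)"
  shows "ord n x = m"
proof (rule ccontr)
  assume "ord n x \<noteq> m"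
  have "ord n x dvd m" using assms(1) ord_divides by blast
  then obtain r where r: "m = ord n x * r" ..
  with \<open>ord n x \<noteq> m\<close> have "r \<noteq> 1" by auto
  then obtain q where q: "prime q" "q dvd r"
    using prime_factor_nat by blast
  then have "m div q = ord n x * (r div q)"
    using r by (simp add: div_mult_swap)
  then have "[x ^ (m div q) = 1] (mod n)" using ord_divides by simp
  moreover have "q dvd m" using q r by simp
  ultimately show False using assms(3) q(1) by blast
qed

lemma ord_power_div_prime_power_part:
  fixes p n q x :: nat
  assumes "prime q" "q dvd n"
    and "[x ^ n = 1] (mod p)" "\<not> [x ^ (n div q) = 1] (mod p)"
  shows "ord p (x ^ (n div q ^ multiplicity q n)) = q ^ multiplicity q n"
proof -
  define e where "e = multiplicity q n"
  have "n \<noteq> 0" using assms(4) by (metis cong_refl div_0 power_0)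
  then have "e > 0"
    using assms(1,2) by (simp add: e_def prime_multiplicity_gt_zero_iff)
  then obtain e' where e': "e = Suc e'" using gr0_implies_Suc by blast
  obtain c where c: "n = c * q ^ e"
    using multiplicity_dvd[of q n] by (auto simp: e_def mult.commute elim: dvdE)
  have q: "q > 0" using assms(1) prime_gt_0_nat by blast
  show ?thesis
    unfolding e_def[symmetric]
  proof (rule ord_eqI_prime_divisors)
    show "[(x ^ (n div q ^ e)) ^ q ^ e = 1] (mod p)"
      using assms(3) q by (simp add: c power_mult[symmetric])
    show "q ^ e > 0" using q by simp
  next
    fix r assume "prime r" "r dvd q ^ e"
    then have "r = q"
      using assms(1) prime_dvd_power primes_dvd_imp_eq by blast
    then show "\<not> [(x ^ (n div q ^ e)) ^ (q ^ e div r) = 1] (mod p)"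
      using assms(4) q by (simp add: c e' power_mult[symmetric] mult_ac)
  qed
qed

lemma prime_power_part_dvd_unitary_divisor:
  fixes n m q :: nat
  assumes "n > 0" "m dvd n" "coprime m (n div m)" "prime q" "q dvd m"
  shows "q ^ multiplicity q n dvd m" and "\<not> q ^ multiplicity q n dvd m div q"
proof -
  define e where "e = multiplicity q n"
  have "coprime q (n div m)"
    using assms(3,5) coprime_divisors[OF _ dvd_refl] by blast
  moreover have "q ^ e dvd m * (n div m)"
    using assms(2) by (simp add: e_def multiplicity_dvd)
  ultimately show "q ^ multiplicity q n dvd m"
    by (simp add: e_def coprime_dvd_mult_left_iff)
  show "\<not> q ^ multiplicity q n dvd m div q"
  proof
    assume "q ^ multiplicity q n dvd m div q"
    with assms(4,5) have "q ^ Suc e dvd m"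
      by (simp add: e_def dvd_div_iff_mult prime_gt_0_nat mult.commute)
    then have "q ^ Suc e dvd n" using assms(2) by (rule dvd_trans)
    then show False
      using assms(1) power_dvd_iff_le_multiplicity[of n q "Suc e"] prime_gt_1_nat[OF assms(4)]
      by (simp add: e_def)
  qed
qed

lemma ord_prod_prime_power_parts:
  fixes p n m :: nat and \<alpha> :: "nat \<Rightarrow> nat"
  assumes "n > 0" "m dvd n" "coprime m (n div m)"
    and \<alpha>: "\<And>q. prime q \<Longrightarrow> q dvd m \<Longrightarrow>
               [\<alpha> q ^ n = 1] (mod p) \<and> \<not> [\<alpha> q ^ (n div q) = 1] (mod p)"
  shows "ord p (\<Prod>q | prime q \<and> q dvd m. \<alpha> q ^ (n div q ^ multiplicity q n)) = m"
proof -
  define P where "P = {q. prime q \<and> q dvd m}"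
  define e where "e q = multiplicity q n" for q
  define \<beta> where "\<beta> q = \<alpha> q ^ (n div q ^ e q)" for q
  have "m > 0" using assms(1,2) by (cases "m = 0") auto
  have "P \<subseteq> {..m}" using \<open>m > 0\<close> by (auto simp: P_def dest: dvd_imp_le)
  then have "finite P" using finite_subset by blast
  have \<beta>_pow_eq_1: "[\<beta> q ^ d = 1] (mod p) \<longleftrightarrow> q ^ e q dvd d" if "q \<in> P" for q d
  proof -
    have "q dvd n" using that assms(2) by (auto simp: P_def)
    then have "ord p (\<beta> q) = q ^ e q"
      using that \<alpha> by (simp add: P_def \<beta>_def e_def ord_power_div_prime_power_part)
    then show ?thesis using ord_divides by simp
  qed
  have part_dvd_m: "q ^ e q dvd m" and part_not_dvd: "\<not> q ^ e q dvd m div q" if "q \<in> P" for q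
    using that prime_power_part_dvd_unitary_divisor[OF assms(1-3)]
    by (simp_all add: P_def e_def)
  have other_part_dvd: "r ^ e r dvd m div q" if "q \<in> P" "r \<in> P - {q}" for q r
  proof -
    have "coprime (r ^ e r) q" using that by (simp add: P_def primes_coprime)
    moreover have "r ^ e r dvd q * (m div q)" using that part_dvd_m by (simp add: P_def)
    ultimately show ?thesis by (simp add: coprime_dvd_mult_right_iff)
  qed
  have power_prod: "(\<Prod>q\<in>P. \<beta> q) ^ d = (\<Prod>q\<in>P. \<beta> q ^ d)" for d
    by (simp add: prod_power_distrib)
  have "ord p (\<Prod>q\<in>P. \<beta> q) = m"
  proof (rule ord_eqI_prime_divisors)
    have "[(\<Prod>q\<in>P. \<beta> q ^ m) = (\<Prod>q\<in>P. 1)] (mod p)"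
      by (rule cong_prod) (use \<beta>_pow_eq_1 part_dvd_m in blast)
    then show "[(\<Prod>q\<in>P. \<beta> q) ^ m = 1] (mod p)" by (simp add: power_prod)
  next
    fix q assume "prime q" "q dvd m"
    then have q: "q \<in> P" by (simp add: P_def)
    have "(\<Prod>r\<in>P. \<beta> r ^ (m div q)) = \<beta> q ^ (m div q) * (\<Prod>r\<in>P - {q}. \<beta> r ^ (m div q))"
      using \<open>finite P\<close> q by (simp add: prod.remove)
    also have "[\<dots> = \<beta> q ^ (m div q) * (\<Prod>r\<in>P - {q}. 1)] (mod p)"
      by (intro cong_mult cong_refl cong_prod) (use \<beta>_pow_eq_1 other_part_dvd q in blast)
    finally have "[(\<Prod>q\<in>P. \<beta> q) ^ (m div q) = \<beta> q ^ (m div q)] (mod p)"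
      by (simp add: power_prod)
    then show "\<not> [(\<Prod>q\<in>P. \<beta> q) ^ (m div q) = 1] (mod p)"
      using \<beta>_pow_eq_1[OF q] part_not_dvd[OF q] cong_trans cong_sym by blast
  qed fact
  then show ?thesis by (simp add: P_def \<beta>_def e_def)
qed

lemma residue_primroot_power_iff:
  assumes "residue_primroot n g"
  shows "residue_primroot n (g ^ j) \<longleftrightarrow> coprime j (totient n)"
proof -
  have n: "n > 0" "coprime n g" "ord n g = totient n"
    using assms by (auto simp: residue_primroot_def)
  have "residue_primroot n (g ^ j) \<longleftrightarrow> totient n div gcd j (totient n) = totient n"
    using n by (simp add: residue_primroot_def ord_power)
  also have "\<dots> \<longleftrightarrow> gcd j (totient n) = 1"
    using n by (simp add: div_eq_dividend_iff)
  finally show ?thesis using coprime_iff_gcd_eq_1 by blast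
qed

lemma residue_primroot_power_power_cong_1_iff:
  assumes "residue_primroot n g" "totient n = m * Q" "m > 0"
  shows "[(g ^ k mod n) ^ m = 1] (mod n) \<longleftrightarrow> Q dvd k"
proof -
  have "[(g ^ k mod n) ^ m = 1] (mod n) \<longleftrightarrow> [g ^ (k * m) = 1] (mod n)"
    by (simp add: cong_def power_mod power_mult)
  also have "\<dots> \<longleftrightarrow> m * Q dvd k * m"
    using assms(1,2) ord_divides[of g "k * m" n] by (simp add: residue_primroot_def)
  also have "\<dots> \<longleftrightarrow> Q dvd k" using assms(3) by (simp add: mult.commute)
  finally show ?thesis .
qed

lemma residue_primroot_cong_powerE:
  assumes "residue_primroot n g" "coprime n a"
  obtains t where "[a = g ^ t] (mod n)"
proof (cases "n = 1")
  case True
  then show ?thesis using that[of 0] by simp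
next
  case False
  with assms(1) have "n > 1" by (auto simp: residue_primroot_def)
  then have "a mod n \<in> totatives n"
    using power_in_totatives[of n a 1] assms(2) by simp
  also have "totatives n = (\<lambda>k. g ^ k mod n) ` {..<totient n}"
    using residue_primroot_is_generator[OF \<open>n > 1\<close> assms(1)] by (simp add: bij_betw_def)
  finally obtain t where "g ^ t mod n = a mod n" by auto
  then show ?thesis using that[of t] by (simp add: cong_def)
qed

lemma prime_residue_primroot_bij_betw:
  assumes "prime p" "residue_primroot p g"
  shows "bij_betw (\<lambda>k. g ^ k mod p) {..<p - 1} {1..p - 1}"
proof -
  have "{0<..<p} = {1..p - 1}" by auto
  then show ?thesis
    using residue_primroot_is_generator[OF prime_gt_1_nat[OF assms(1)] assms(2)] assms(1)
    by (simp add: totient_prime totatives_prime)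
qed

lemma residue_primroot_translate_iff:
  assumes g: "residue_primroot n g" and tot: "totient n = m * Q" and "coprime m Q" "m > 0"
    and a: "[a = g ^ t] (mod n)" and "ord n a = m"
  shows "residue_primroot n (a * (g ^ k mod n) ^ m mod n) \<longleftrightarrow> coprime k Q"
proof -
  have "m = ord n (g ^ t)" using assms(6) ord_cong[OF a] by simp
  also have "\<dots> = m * Q div gcd t (m * Q)"
    using g tot by (simp add: residue_primroot_def ord_power)
  finally have "m * Q = gcd t (m * Q) * m" by (metis dvd_mult_div_cancel gcd_dvd2)
  then have gcd: "gcd t (m * Q) = Q" using \<open>m > 0\<close> by simp
  have "[(g ^ k mod n) ^ m = g ^ (k * m)] (mod n)"
    by (simp add: cong_def power_mod power_mult)
  from cong_mult[OF a this] have "[a * (g ^ k mod n) ^ m = g ^ (t + k * m)] (mod n)"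
    by (simp add: power_add)
  then have "residue_primroot n (a * (g ^ k mod n) ^ m mod n) \<longleftrightarrow> residue_primroot n (g ^ (t + k * m))"
    by (simp add: residue_primroot_cong)
  also have "\<dots> \<longleftrightarrow> coprime k Q"
    using residue_primroot_power_iff[OF g] tot coprime_add_mult_iff[OF gcd assms(3)] by simp
  finally show ?thesis .
qed

lemma card_power_not_cong_1:
  fixes p m Q :: nat
  assumes "prime p" "p - 1 = m * Q"
  shows "card {b \<in> {1..p - 1}. \<not> [b ^ m = 1] (mod p)} = m * (Q - 1)"
proof -
  obtain g where g: "residue_primroot p g"
    using prime_primitive_root_exists[OF prime_gt_1_nat[OF assms(1)] assms(1)] by blast
  have "m * Q > 0" using assms(2) prime_gt_1_nat[OF assms(1)] by linarith
  then have "m > 0" "Q > 0" by auto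
  have "card {b \<in> {1..p - 1}. \<not> [b ^ m = 1] (mod p)}
        = card {k \<in> {..<p - 1}. \<not> [(g ^ k mod p) ^ m = 1] (mod p)}"
    by (rule card_filter_bij_betw[OF prime_residue_primroot_bij_betw[OF assms(1) g]])
  also have "{k \<in> {..<p - 1}. \<not> [(g ^ k mod p) ^ m = 1] (mod p)} = {k. k < m * Q \<and> \<not> Q dvd k}"
    using residue_primroot_power_power_cong_1_iff[OF g _ \<open>m > 0\<close>] assms
    by (auto simp: totient_prime)
  also have "card \<dots> = m * (Q - 1)" using \<open>Q > 0\<close> by (rule card_not_dvd_less_mult)
  finally show ?thesis .
qed

lemma card_residue_primroot_translates:
  fixes p m Q a :: nat
  assumes "prime p" "p - 1 = m * Q" "coprime m Q" "Q > 1" "ord p a = m"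
  shows "card {b \<in> {b \<in> {1..p - 1}. \<not> [b ^ m = 1] (mod p)}. residue_primroot p (a * b ^ m mod p)}
         = m * totient Q"
proof -
  obtain g where g: "residue_primroot p g"
    using prime_primitive_root_exists[OF prime_gt_1_nat[OF assms(1)] assms(1)] by blast
  have tot: "totient p = m * Q" using assms(1,2) by (simp add: totient_prime)
  have "m * Q > 0" using assms(2) prime_gt_1_nat[OF assms(1)] by linarith
  then have "m > 0" by simp
  have "coprime p a" using assms(5) \<open>m > 0\<close> ord_gt_0_iff by metis
  then obtain t where a: "[a = g ^ t] (mod p)" by (rule residue_primroot_cong_powerE[OF g])
  have "card {b \<in> {b \<in> {1..p - 1}. \<not> [b ^ m = 1] (mod p)}. residue_primroot p (a * b ^ m mod p)}
        = card {b \<in> {1..p - 1}. \<not> [b ^ m = 1] (mod p) \<and> residue_primroot p (a * b ^ m mod p)}"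
    by (rule arg_cong[where f = card]) auto
  also have "\<dots> = card {k \<in> {..<p - 1}. \<not> [(g ^ k mod p) ^ m = 1] (mod p) \<and>
                                  residue_primroot p (a * (g ^ k mod p) ^ m mod p)}"
    by (rule card_filter_bij_betw[OF prime_residue_primroot_bij_betw[OF assms(1) g]])
  also have "{k \<in> {..<p - 1}. \<not> [(g ^ k mod p) ^ m = 1] (mod p) \<and>
                               residue_primroot p (a * (g ^ k mod p) ^ m mod p)}
             = {k. k < m * Q \<and> coprime k Q}"
    using residue_primroot_power_power_cong_1_iff[OF g tot \<open>m > 0\<close>]
      residue_primroot_translate_iff[OF g tot assms(3) \<open>m > 0\<close> a assms(5)] assms(2,4)
    by (auto dest: coprime_common_divisor[OF _ _ dvd_refl])
  also have "card \<dots> = m * totient Q" using assms(4) by (rule card_coprime_less_mult)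
  finally show ?thesis .
qed

theorem theorem1:
  fixes p Q :: nat and B :: real and \<alpha> :: "nat \<Rightarrow> nat"
  assumes "prime p" and "p \<ge> 3" and "B > 1"
    and "Q > 0" and "Q dvd p - 1"
    and "\<forall>q. prime q \<and> q dvd Q \<longrightarrow> real q \<ge> B"
    and "\<forall>q. prime q \<and> q dvd (p - 1) div Q \<longrightarrow> real q < B"
    and "Q > 1"
    and "\<forall>q\<in>{q. prime q \<and> q dvd p - 1 \<and> real q < B}.
           \<alpha> q \<in> {1..p - 1} \<and> \<not> [\<alpha> q ^ ((p - 1) div q) = 1] (mod p)"
  shows "let P = {q. prime q \<and> q dvd p - 1 \<and> real q < B};
             a = (\<Prod>q\<in>P. \<alpha> q ^ ((p - 1) div q ^ multiplicity q (p - 1)));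
             S = {b \<in> {1..p - 1}. \<not> [b ^ ((p - 1) div Q) = 1] (mod p)}
         in real (card {b \<in> S. residue_primroot p (a * b ^ ((p - 1) div Q) mod p)})
              \<ge> real (totient Q) / real (Q - 1) * real (card S)"
proof -
  define m where "m = (p - 1) div Q"
  define a where "a = (\<Prod>q | prime q \<and> q dvd p - 1 \<and> real q < B.
                          \<alpha> q ^ ((p - 1) div q ^ multiplicity q (p - 1)))"
  have n: "p - 1 = m * Q" using assms(5) by (simp add: m_def)
  then have "m > 0" using assms(2) by (cases "m = 0") auto
  have "coprime m Q"
    using coprime_smooth_part_rough_part[OF assms(5-7)] by (simp add: m_def)
  note P = prime_divisors_below_eq_smooth_part[OF assms(5-7), folded m_def]
  have "ord p a = m"
    unfolding a_def P
  proof (rule ord_prod_prime_power_parts)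
    show "p - 1 > 0" "m dvd p - 1" "coprime m ((p - 1) div m)"
      using assms(2,8) n \<open>m > 0\<close> \<open>coprime m Q\<close> by auto
  next
    fix q assume "prime q" "q dvd m"
    with assms(9) P have "\<alpha> q \<in> {1..p - 1}" "\<not> [\<alpha> q ^ ((p - 1) div q) = 1] (mod p)" by auto
    moreover from this(1) have "[\<alpha> q ^ (p - 1) = 1] (mod p)"
      by (intro fermat_theorem[OF assms(1)]) (auto dest: dvd_imp_le)
    ultimately show "[\<alpha> q ^ (p - 1) = 1] (mod p) \<and> \<not> [\<alpha> q ^ ((p - 1) div q) = 1] (mod p)"
      by blast
  qed
  then have "card {b \<in> {b \<in> {1..p - 1}. \<not> [b ^ m = 1] (mod p)}. residue_primroot p (a * b ^ m mod p)}
             = m * totient Q"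
    by (rule card_residue_primroot_translates[OF assms(1) n \<open>coprime m Q\<close> assms(8)])
  moreover have "card {b \<in> {1..p - 1}. \<not> [b ^ m = 1] (mod p)} = m * (Q - 1)"
    by (rule card_power_not_cong_1[OF assms(1) n])
  moreover have "real (m * totient Q) = real (totient Q) / real (Q - 1) * real (m * (Q - 1))"
    using assms(8) by simp
  ultimately show ?thesis
    unfolding Let_def a_def[symmetric] m_def[symmetric] by simp
qed

end
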